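(* The output $S=S^{(B)}$ of Algorithm 1 satisfies, for each $c\in C$, \[ \mathbb{E}[f_c(S)] \;\ge\; \left(1-\frac1e\right)\mathrm{OPT}. \]
   Context: Setup: $V$ is a finite nonempty ground set, $C$ is a finite nonempty set of "colors", $k=|C|$. For each $c\in C$, $f_c\colon 2^V\to\mathbb{R}_{\ge 0}$ is monotone and submodular. $B$ is a positive integer (the budget). $f(T\mid S)=f(S\cup T)-f(S)$ and $f(v\mid S)=f(\{v\}\mid S)$. $\mathrm{OPT}=\max_{S\subseteq V,\,|S|\le B}\min_{c\in C} f_c(S)$. $\Delta_V$ is the probability simplex over $V$. Algorithm 1 (assumes $\mathrm{OPT}$ known): set $S^{(0)}=\emptyset$; for $i=1,\dots,B$: choose any $x^{(i)}\in\Delta_V$ (the choice may depend arbitrarily on the history) such that $\sum_{v\in V}x^{(i)}_v f_c(v\mid S^{(i-1)})\ge \frac1B(\mathrm{OPT}-f_c(S^{(i-1)}))$ for all $c\in C$ (such $x^{(i)}$ always exists); sample $v^{(i)}\sim x^{(i)}$ using fresh randomness; set $S^{(i)}=S^{(i-1)}\cup\{v^{(i)}\}$. Output $S^{(B)}$. *)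

theory Defs
  imports "HOL-Probability.Probability"
begin

definition marg :: "('a set \<Rightarrow> real) \<Rightarrow> 'a \<Rightarrow> 'a set \<Rightarrow> real" where
  "marg g v S = g (S \<union> {v}) - g S"

definition monotone_on_sets :: "'a set \<Rightarrow> ('a set \<Rightarrow> real) \<Rightarrow> bool" where
  "monotone_on_sets V g \<longleftrightarrow> (\<forall>S T. S \<subseteq> T \<and> T \<subseteq> V \<longrightarrow> g S \<le> g T)"

definition submodular_on :: "'a set \<Rightarrow> ('a set \<Rightarrow> real) \<Rightarrow> bool" where
  "submodular_on V g \<longleftrightarrow>
     (\<forall>S T. S \<subseteq> V \<and> T \<subseteq> V \<longrightarrow> g (S \<union> T) + g (S \<inter> T) \<le> g S + g T)"

definition nonneg_on :: "'a set \<Rightarrow> ('a set \<Rightarrow> real) \<Rightarrow> bool" where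
  "nonneg_on V g \<longleftrightarrow> (\<forall>S. S \<subseteq> V \<longrightarrow> 0 \<le> g S)"

definition OPT :: "'a set \<Rightarrow> 'c set \<Rightarrow> ('c \<Rightarrow> 'a set \<Rightarrow> real) \<Rightarrow> nat \<Rightarrow> real" where
  "OPT V C f B = Max {Min ((\<lambda>c. f c S) ` C) | S. S \<subseteq> V \<and> card S \<le> B}"

text \<open>Algorithm 1 with an arbitrary (history-dependent) choice rule x:
  x maps the history (sequence of sampled elements v^(1),...,v^(i-1)) to a distribution
  on elements.  run x i is the distribution of the history after i rounds;
  S^(i) is the set of the history.\<close>
primrec alg_run :: "('a list \<Rightarrow> 'a pmf) \<Rightarrow> nat \<Rightarrow> 'a list pmf" where
  "alg_run x 0 = return_pmf []"
| "alg_run x (Suc i) = bind_pmf (alg_run x i) (\<lambda>h. map_pmf (\<lambda>v. h @ [v]) (x h))"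

end

theory Submission
  imports Defs
begin

text \<open>Let E_i be the expectation of f_c(S^(i)). Whatever the history, the next round adds
  the expected marginal gain sum_v x_v f_c(v | S), which the choice of x bounds below by
  (OPT - f_c(S))/B; averaging over histories gives OPT - E_(i+1) \<le> (1 - 1/B)(OPT - E_i), hence
  OPT - E_B \<le> (1 - 1/B)^B (OPT - f_c({})) \<le> OPT/e.\<close>

lemma set_pmf_alg_run_subset:
  assumes "\<forall>j<i. \<forall>h\<in>set_pmf (alg_run x j). set_pmf (x h) \<subseteq> V"
  shows "set_pmf (alg_run x i) \<subseteq> {h. set h \<subseteq> V \<and> length h = i}"
  using assms
proof (induction i)
  case 0
  then show ?case by simp
next
  case (Suc i)
  have IH: "set_pmf (alg_run x i) \<subseteq> {h. set h \<subseteq> V \<and> length h = i}"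
    using Suc.prems by (intro Suc.IH) (blast intro: less_SucI)
  show ?case
  proof
    fix h assume "h \<in> set_pmf (alg_run x (Suc i))"
    then obtain h' v where "h' \<in> set_pmf (alg_run x i)" "v \<in> set_pmf (x h')" "h = h' @ [v]"
      by auto
    with IH Suc.prems show "h \<in> {h. set h \<subseteq> V \<and> length h = Suc i}" by auto
  qed
qed

lemma finite_set_pmf_alg_run:
  assumes "finite V" "\<forall>j<i. \<forall>h\<in>set_pmf (alg_run x j). set_pmf (x h) \<subseteq> V"
  shows "finite (set_pmf (alg_run x i))"
  using set_pmf_alg_run_subset[OF assms(2)] finite_lists_length_eq[OF assms(1)]
  by (rule finite_subset)

lemma expectation_union_singleton:
  assumes "finite V" "set_pmf p \<subseteq> V"
  shows "measure_pmf.expectation p (\<lambda>v. g (S \<union> {v})) = g S + (\<Sum>v\<in>V. pmf p v * marg g v S)"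
proof -
  have "measure_pmf.expectation p (\<lambda>v. g (S \<union> {v})) = (\<Sum>v\<in>V. pmf p v * (g S + marg g v S))"
    using assms by (subst integral_measure_pmf_real[of V]) (auto simp: marg_def mult.commute)
  also have "\<dots> = g S * (\<Sum>v\<in>V. pmf p v) + (\<Sum>v\<in>V. pmf p v * marg g v S)"
    by (simp add: distrib_left sum.distrib sum_distrib_left mult.commute)
  also have "(\<Sum>v\<in>V. pmf p v) = 1"
    using assms by (intro sum_pmf_eq_1) auto
  finally show ?thesis by simp
qed

lemma expectation_alg_run_Suc:
  assumes "finite V" "finite (set_pmf (alg_run x i))"
    and "\<And>h. h \<in> set_pmf (alg_run x i) \<Longrightarrow> set_pmf (x h) \<subseteq> V"
  shows "measure_pmf.expectation (alg_run x (Suc i)) (\<lambda>h. g (set h))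
    = measure_pmf.expectation (alg_run x i)
        (\<lambda>h. g (set h) + (\<Sum>v\<in>V. pmf (x h) v * marg g v (set h)))"
proof -
  let ?A = "set_pmf (alg_run x i)"
  have "\<And>h. h \<in> ?A \<Longrightarrow> finite (set_pmf (map_pmf (\<lambda>v. h @ [v]) (x h)))"
    using assms(1,3) by (auto intro: finite_subset)
  then have "measure_pmf.expectation (alg_run x (Suc i)) (\<lambda>h. g (set h))
      = (\<Sum>h\<in>?A. pmf (alg_run x i) h *\<^sub>R
          measure_pmf.expectation (map_pmf (\<lambda>v. h @ [v]) (x h)) (\<lambda>h. g (set h)))"
    using assms(2) by (subst alg_run.simps, intro pmf_expectation_bind) auto
  also have "\<dots> = (\<Sum>h\<in>?A. pmf (alg_run x i) h *\<^sub>R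
      (g (set h) + (\<Sum>v\<in>V. pmf (x h) v * marg g v (set h))))"
  proof (intro sum.cong refl)
    fix h assume "h \<in> ?A"
    have "measure_pmf.expectation (map_pmf (\<lambda>v. h @ [v]) (x h)) (\<lambda>h. g (set h))
        = measure_pmf.expectation (x h) (\<lambda>v. g (set h \<union> {v}))"
      by simp
    then show "pmf (alg_run x i) h *\<^sub>R
          measure_pmf.expectation (map_pmf (\<lambda>v. h @ [v]) (x h)) (\<lambda>h. g (set h))
        = pmf (alg_run x i) h *\<^sub>R (g (set h) + (\<Sum>v\<in>V. pmf (x h) v * marg g v (set h)))"
      using expectation_union_singleton[OF assms(1) assms(3)[OF \<open>h \<in> ?A\<close>]] by simp
  qed
  also have "\<dots> = measure_pmf.expectation (alg_run x i)
      (\<lambda>h. g (set h) + (\<Sum>v\<in>V. pmf (x h) v * marg g v (set h)))"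
    using assms(2) by (subst integral_measure_pmf[of ?A]) auto
  finally show ?thesis .
qed

lemma alg_run_gap_contraction:
  fixes Opt :: real
  assumes "finite V" "B > 0" "finite (set_pmf (alg_run x i))"
    and "\<And>h. h \<in> set_pmf (alg_run x i) \<Longrightarrow> set_pmf (x h) \<subseteq> V"
    and greedy: "\<And>h. h \<in> set_pmf (alg_run x i) \<Longrightarrow>
      (\<Sum>v\<in>V. pmf (x h) v * marg g v (set h)) \<ge> (Opt - g (set h)) / real B"
  shows "Opt - measure_pmf.expectation (alg_run x (Suc i)) (\<lambda>h. g (set h))
    \<le> (1 - 1 / real B) * (Opt - measure_pmf.expectation (alg_run x i) (\<lambda>h. g (set h)))"
proof -
  let ?E = "\<lambda>j. measure_pmf.expectation (alg_run x j) (\<lambda>h. g (set h))"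
  have int: "integrable (measure_pmf (alg_run x i)) F" for F :: "'a list \<Rightarrow> real"
    using assms(3) by (rule integrable_measure_pmf_finite)
  have "(1 - 1 / real B) * ?E i + Opt / real B
      = measure_pmf.expectation (alg_run x i) (\<lambda>h. (1 - 1 / real B) * g (set h) + Opt / real B)"
    using int by simp
  also have "\<dots> \<le> measure_pmf.expectation (alg_run x i)
      (\<lambda>h. g (set h) + (\<Sum>v\<in>V. pmf (x h) v * marg g v (set h)))"
    using greedy assms(2)
    by (intro integral_mono_AE int) (auto simp: AE_measure_pmf_iff field_simps)
  also have "\<dots> = ?E (Suc i)"
    using expectation_alg_run_Suc[OF assms(1,3,4)] by simp
  finally show ?thesis
    by (simp add: algebra_simps)
qed

lemma power_contraction_bound:
  fixes d :: "nat \<Rightarrow> real"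
  assumes "0 \<le> q" "\<And>i. i < n \<Longrightarrow> d (Suc i) \<le> q * d i"
  shows "d n \<le> q ^ n * d 0"
  using assms(2)
proof (induction n)
  case 0
  then show ?case by simp
next
  case (Suc n)
  then have "d (Suc n) \<le> q * d n" by simp
  also have "\<dots> \<le> q * (q ^ n * d 0)"
    using Suc assms(1) by (intro mult_left_mono) auto
  finally show ?case by simp
qed

lemma OPT_nonneg:
  assumes "finite V" "finite C" "C \<noteq> {}" "\<forall>c\<in>C. nonneg_on V (f c)"
  shows "0 \<le> OPT V C f B"
proof -
  let ?vals = "{Min ((\<lambda>c. f c S) ` C) | S. S \<subseteq> V \<and> card S \<le> B}"
  have "?vals \<subseteq> (\<lambda>S. Min ((\<lambda>c. f c S) ` C)) ` Pow V"
    by auto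
  then have "finite ?vals"
    using assms(1) by (auto intro: finite_subset)
  moreover have "Min ((\<lambda>c. f c {}) ` C) \<in> ?vals"
    by auto
  moreover have "0 \<le> Min ((\<lambda>c. f c {}) ` C)"
    using assms(2-4) by (simp add: Min_ge_iff nonneg_on_def)
  ultimately show ?thesis
    unfolding OPT_def by (meson Max_ge order.trans)
qed

theorem lemma3:
  fixes V :: "'a set" and C :: "'c set" and f :: "'c \<Rightarrow> 'a set \<Rightarrow> real"
    and B :: nat and x :: "'a list \<Rightarrow> 'a pmf"
  assumes "finite V" "V \<noteq> {}" "finite C" "C \<noteq> {}" "B > 0"
    and "\<forall>c\<in>C. monotone_on_sets V (f c) \<and> submodular_on V (f c) \<and> nonneg_on V (f c)"
    and valid: "\<forall>i<B. \<forall>h\<in>set_pmf (alg_run x i).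
        set_pmf (x h) \<subseteq> V \<and>
        (\<forall>c\<in>C. (\<Sum>v\<in>V. pmf (x h) v * marg (f c) v (set h))
                 \<ge> (OPT V C f B - f c (set h)) / real B)"
  shows "\<forall>c\<in>C. measure_pmf.expectation (alg_run x B) (\<lambda>h. f c (set h))
                 \<ge> (1 - 1 / exp 1) * OPT V C f B"
proof
  fix c assume "c \<in> C"
  let ?Opt = "OPT V C f B" and ?q = "1 - 1 / real B"
  let ?E = "\<lambda>i. measure_pmf.expectation (alg_run x i) (\<lambda>h. f c (set h))"
  have "?Opt - ?E (Suc i) \<le> ?q * (?Opt - ?E i)" if "i < B" for i
    using that valid \<open>c \<in> C\<close> assms(1,5)
    by (intro alg_run_gap_contraction finite_set_pmf_alg_run) (auto dest: less_trans)
  then have "?Opt - ?E B \<le> ?q ^ B * (?Opt - f c {})"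
    using power_contraction_bound[of ?q B "\<lambda>i. ?Opt - ?E i"] assms(5) by simp
  also have "\<dots> \<le> ?q ^ B * ?Opt"
    using assms(5,6) \<open>c \<in> C\<close> by (intro mult_left_mono) (auto simp: nonneg_on_def)
  also have "\<dots> \<le> exp (-1) * ?Opt"
    using exp_ge_one_minus_x_over_n_power_n[of 1 B] OPT_nonneg[of V C f B] assms
    by (intro mult_right_mono) auto
  finally show "?E B \<ge> (1 - 1 / exp 1) * ?Opt"
    by (simp add: exp_minus field_simps)
qed

end
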